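(* Every $2$-connected graph that contains no induced subgraph isomorphic to $P_4$ and no induced subgraph isomorphic to $2K_2$ is cummerbund covered.
   Context: All graphs are finite and simple. $P_4$ is the path on $4$ vertices and $2K_2$ is the graph consisting of two vertex-disjoint edges. A cummerbund of a graph is a longest cycle in it; a graph is cummerbund covered if every vertex lies in some cummerbund. *)

theory Defs
  imports Main
begin

definition simple_graph :: "'a set \<Rightarrow> ('a \<Rightarrow> 'a \<Rightarrow> bool) \<Rightarrow> bool" where
  "simple_graph V E \<longleftrightarrow> finite V \<and> (\<forall>u v. E u v \<longrightarrow> u \<in> V \<and> v \<in> V)
     \<and> (\<forall>u v. E u v \<longrightarrow> E v u) \<and> (\<forall>v. \<not> E v v)"

definition connected_on :: "('a \<Rightarrow> 'a \<Rightarrow> bool) \<Rightarrow> 'a set \<Rightarrow> bool" where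
  "connected_on E S \<longleftrightarrow> S \<noteq> {} \<and>
     (\<forall>u\<in>S. \<forall>v\<in>S. (\<lambda>x y. E x y \<and> x \<in> S \<and> y \<in> S)\<^sup>*\<^sup>* u v)"

definition two_connected :: "'a set \<Rightarrow> ('a \<Rightarrow> 'a \<Rightarrow> bool) \<Rightarrow> bool" where
  "two_connected V E \<longleftrightarrow> card V \<ge> 3 \<and> connected_on E V \<and>
     (\<forall>v\<in>V. connected_on E (V - {v}))"

definition has_induced_P4 :: "'a set \<Rightarrow> ('a \<Rightarrow> 'a \<Rightarrow> bool) \<Rightarrow> bool" where
  "has_induced_P4 V E \<longleftrightarrow> (\<exists>a\<in>V. \<exists>b\<in>V. \<exists>c\<in>V. \<exists>d\<in>V. distinct [a,b,c,d] \<and>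
     E a b \<and> E b c \<and> E c d \<and> \<not> E a c \<and> \<not> E b d \<and> \<not> E a d)"

definition has_induced_2K2 :: "'a set \<Rightarrow> ('a \<Rightarrow> 'a \<Rightarrow> bool) \<Rightarrow> bool" where
  "has_induced_2K2 V E \<longleftrightarrow> (\<exists>a\<in>V. \<exists>b\<in>V. \<exists>c\<in>V. \<exists>d\<in>V. distinct [a,b,c,d] \<and>
     E a b \<and> E c d \<and> \<not> E a c \<and> \<not> E a d \<and> \<not> E b c \<and> \<not> E b d)"

text \<open>A cycle, given as the list of its (distinct) vertices in cyclic order;
  its length is the number of vertices.\<close>
definition is_cycle :: "'a set \<Rightarrow> ('a \<Rightarrow> 'a \<Rightarrow> bool) \<Rightarrow> 'a list \<Rightarrow> bool" where
  "is_cycle V E cs \<longleftrightarrow> length cs \<ge> 3 \<and> distinct cs \<and> set cs \<subseteq> V \<and>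
     (\<forall>i < length cs - 1. E (cs ! i) (cs ! (i + 1))) \<and> E (last cs) (hd cs)"

definition cummerbund :: "'a set \<Rightarrow> ('a \<Rightarrow> 'a \<Rightarrow> bool) \<Rightarrow> 'a list \<Rightarrow> bool" where
  "cummerbund V E cs \<longleftrightarrow> is_cycle V E cs \<and>
     (\<forall>ds. is_cycle V E ds \<longrightarrow> length ds \<le> length cs)"

definition cummerbund_covered :: "'a set \<Rightarrow> ('a \<Rightarrow> 'a \<Rightarrow> bool) \<Rightarrow> bool" where
  "cummerbund_covered V E \<longleftrightarrow> (\<forall>v\<in>V. \<exists>cs. cummerbund V E cs \<and> v \<in> set cs)"

end

(*
  In a graph without induced P4 and 2K2, non-adjacent vertices e, f have nested
  neighbourhoods: a neighbour x of e only and a neighbour y of f only would span an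
  induced P4 e-x-y-f or an induced 2K2 {ex, fy}.

  Let C be a longest cycle and v a vertex off C. If N(t) is contained in N(v) for some t
  on C, replacing t by v gives a longest cycle through v. Otherwise N(v) is contained in
  N(t) for every non-neighbour t of v on C. Then every neighbour of v lies on C (else it
  could be inserted between two consecutive non-neighbours of v), and since v has degree
  at least 2 and no two consecutive neighbours on C, we can write C = a P b Q with a, b
  neighbours of v, P, Q non-empty and no neighbour of v on P. The last vertex of Q is a
  non-neighbour of v, hence adjacent to b, so a P Q b v is a cycle except possibly at the
  junction of the last vertex e of P and the first vertex f of Q. If e and f are adjacent
  this cycle is longer than C; otherwise their neighbourhoods are nested, and dropping e
  or f leaves a longest cycle through v.
*)
theory Submission
  imports Defs
begin

lemma is_cycle_iff_successively:
  "is_cycle V E cs \<longleftrightarrow>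
     3 \<le> length cs \<and> distinct cs \<and> set cs \<subseteq> V \<and> successively E cs \<and> E (last cs) (hd cs)"
  unfolding is_cycle_def successively_conv_nth by (auto simp: less_diff_conv)

lemma is_cycle_rotate:
  assumes "is_cycle V E (xs @ ys)"
  shows "is_cycle V E (ys @ xs)"
proof (cases "xs = [] \<or> ys = []")
  case True
  then show ?thesis using assms by auto
next
  case False
  then show ?thesis
    using assms unfolding is_cycle_iff_successively by (auto simp: successively_append_iff)
qed

lemma is_cycle_insert:
  assumes "is_cycle V E (xs @ ys)" "xs \<noteq> []" "ys \<noteq> []" "w \<in> V" "w \<notin> set (xs @ ys)"
    and "E (last xs) w" "E w (hd ys)"
  shows "is_cycle V E (xs @ w # ys)"
  using assms unfolding is_cycle_iff_successively
  by (auto simp: successively_append_iff successively_Cons hd_append)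

lemma is_cycle_length_le_card:
  assumes "finite V" "is_cycle V E cs"
  shows "length cs \<le> card V"
  using assms unfolding is_cycle_def by (metis card_mono distinct_card)

lemma cummerbund_exists:
  assumes "finite V" "is_cycle V E cs"
  shows "\<exists>C. cummerbund V E C"
  using ex_has_greatest_nat[of "is_cycle V E" cs length "Suc (card V)"]
    is_cycle_length_le_card[OF assms(1)] assms(2)
  unfolding cummerbund_def by (meson le_imp_less_Suc)

lemma cummerbund_if_length_ge:
  assumes "cummerbund V E C" "is_cycle V E D" "length C \<le> length D"
  shows "cummerbund V E D"
  using assms unfolding cummerbund_def by (meson order_trans)

lemma cummerbund_rotate:
  assumes "cummerbund V E (xs @ ys)"
  shows "cummerbund V E (ys @ xs)"
  using assms is_cycle_rotate unfolding cummerbund_def by fastforce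

lemma cummerbund_not_insertable:
  assumes "cummerbund V E (xs @ ys)" "xs \<noteq> []" "ys \<noteq> []" "w \<in> V" "w \<notin> set (xs @ ys)"
  shows "\<not> (E (last xs) w \<and> E w (hd ys))"
proof
  assume "E (last xs) w \<and> E w (hd ys)"
  moreover have "is_cycle V E (xs @ ys)" using assms(1) unfolding cummerbund_def by blast
  ultimately have "is_cycle V E (xs @ w # ys)" using is_cycle_insert[OF _ assms(2-5)] by blast
  with assms(1) have "length (xs @ w # ys) \<le> length (xs @ ys)"
    unfolding cummerbund_def by blast
  then show False by simp
qed

lemma connected_on_first_step:
  assumes "connected_on E S" "v \<in> S" "z \<in> S" "z \<noteq> v"
  shows "\<exists>w\<in>S. E v w"
proof -
  have "(\<lambda>x y. E x y \<and> x \<in> S \<and> y \<in> S)\<^sup>*\<^sup>* v z"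
    using assms(1-3) unfolding connected_on_def by blast
  then show ?thesis using assms(4) by (cases rule: converse_rtranclpE) auto
qed

context
  fixes V :: "'a set" and E :: "'a \<Rightarrow> 'a \<Rightarrow> bool"
  assumes graph: "simple_graph V E"
begin

lemma edge_vertices: "E u w \<Longrightarrow> u \<in> V \<and> w \<in> V"
  using graph unfolding simple_graph_def by blast

lemma edge_sym: "E u w \<Longrightarrow> E w u"
  using graph unfolding simple_graph_def by blast

lemma edge_irrefl: "\<not> E u u"
  using graph unfolding simple_graph_def by blast

lemma nbhds_nested_if_P4_2K2_free:
  assumes "\<not> has_induced_P4 V E" "\<not> has_induced_2K2 V E"
    and "e \<in> V" "f \<in> V" "e \<noteq> f" "\<not> E e f"
  shows "{x. E e x} \<subseteq> {x. E f x} \<or> {x. E f x} \<subseteq> {x. E e x}"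
proof (rule ccontr)
  assume "\<not> ?thesis"
  then obtain x y where x: "E e x" "\<not> E f x" and y: "E f y" "\<not> E e y" by blast
  have "x \<in> V" "y \<in> V" using x y edge_vertices by auto
  moreover have "distinct [e, x, y, f]" using x y assms(5,6) edge_irrefl edge_sym by auto
  ultimately have "has_induced_P4 V E \<or> has_induced_2K2 V E"
  proof (cases "E x y")
    case True
    then have "has_induced_P4 V E"
      unfolding has_induced_P4_def
      using \<open>x \<in> V\<close> \<open>y \<in> V\<close> \<open>distinct [e, x, y, f]\<close> assms(3,4,6) x y edge_sym
      by (intro bexI[of _ e] bexI[of _ x] bexI[of _ y] bexI[of _ f]) auto
    then show ?thesis ..
  next
    case False
    then have "has_induced_2K2 V E"
      unfolding has_induced_2K2_def
      using \<open>x \<in> V\<close> \<open>y \<in> V\<close> \<open>distinct [e, x, y, f]\<close> assms(3,4,6) x y edge_sym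
      by (intro bexI[of _ e] bexI[of _ x] bexI[of _ f] bexI[of _ y]) auto
    then show ?thesis ..
  qed
  then show False using assms(1,2) by blast
qed

lemma two_connected_other_neighbour:
  assumes "two_connected V E" "v \<in> V"
  shows "\<exists>w. E v w \<and> w \<noteq> u"
proof -
  have "\<not> V \<subseteq> {u, v}"
  proof
    assume "V \<subseteq> {u, v}"
    then have "card V \<le> card {u, v}" by (intro card_mono) auto
    also have "\<dots> \<le> 2" by (simp add: card_insert_if)
    finally show False using assms(1) unfolding two_connected_def by simp
  qed
  then obtain z where z: "z \<in> V" "z \<noteq> u" "z \<noteq> v" by blast
  show ?thesis
  proof (cases "u \<in> V \<and> u \<noteq> v")
    case True
    then have "connected_on E (V - {u})" using assms(1) unfolding two_connected_def by blast
    then obtain w where "w \<in> V - {u}" "E v w"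
      using connected_on_first_step[of E "V - {u}" v z] z True assms(2) by blast
    then show ?thesis by blast
  next
    case False
    have "connected_on E V" using assms(1) unfolding two_connected_def by blast
    then obtain w where "w \<in> V" "E v w"
      using connected_on_first_step[of E V v z] z assms(2) by blast
    then show ?thesis using False edge_irrefl[of v] by blast
  qed
qed

lemma cycle_exists_if_P4_2K2_free:
  assumes "two_connected V E" "\<not> has_induced_P4 V E" "\<not> has_induced_2K2 V E"
  shows "\<exists>C. is_cycle V E C"
proof -
  obtain v where v: "v \<in> V"
    using assms(1) unfolding two_connected_def connected_on_def by blast
  obtain u w where u: "E v u" and w: "E v w" "w \<noteq> u"
    using two_connected_other_neighbour[OF assms(1) v] by metis
  have "u \<in> V" "w \<in> V" using u w edge_vertices by auto
  show ?thesis
  proof (cases "E u w")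
    case True
    then have "is_cycle V E [v, u, w]"
      using u w v \<open>u \<in> V\<close> \<open>w \<in> V\<close> edge_irrefl edge_sym
      unfolding is_cycle_iff_successively by auto
    then show ?thesis ..
  next
    case False
    have quad: "is_cycle V E [v, a, x, b]"
      if "{y. E a y} \<subseteq> {y. E b y}" "E v a" "E v b" "a \<noteq> b" "\<not> E a b" "E a x" "x \<noteq> v"
      for a b x
    proof -
      have "E b x" using that(1,6) by blast
      then show ?thesis
        using that v edge_vertices[of a x] edge_vertices[of b x] edge_irrefl[of a]
          edge_irrefl[of v] edge_sym[of b x] edge_sym[of v b]
        unfolding is_cycle_iff_successively by auto
    qed
    from nbhds_nested_if_P4_2K2_free[OF assms(2,3) \<open>u \<in> V\<close> \<open>w \<in> V\<close> w(2)[symmetric] False]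
    show ?thesis
    proof
      assume "{y. E u y} \<subseteq> {y. E w y}"
      moreover obtain x where "E u x" "x \<noteq> v"
        using two_connected_other_neighbour[OF assms(1) \<open>u \<in> V\<close>] by blast
      ultimately have "is_cycle V E [v, u, x, w]" using quad[of u w x] u w False by blast
      then show ?thesis ..
    next
      assume "{y. E w y} \<subseteq> {y. E u y}"
      moreover obtain x where "E w x" "x \<noteq> v"
        using two_connected_other_neighbour[OF assms(1) \<open>w \<in> V\<close>] by blast
      ultimately have "is_cycle V E [v, w, x, u]" using quad[of w u x] u w False edge_sym by blast
      then show ?thesis ..
    qed
  qed
qed

lemma cummerbund_replace_vertex:
  assumes "cummerbund V E (t # cs)" "v \<in> V" "v \<notin> set cs" "{x. E t x} \<subseteq> {x. E v x}"
  shows "cummerbund V E (v # cs)"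
proof -
  have cyc: "is_cycle V E (t # cs)" using assms(1) unfolding cummerbund_def by blast
  then have "cs \<noteq> []" unfolding is_cycle_def by auto
  with cyc have "E t (hd cs)" "E (last cs) t"
    unfolding is_cycle_iff_successively by (auto simp: successively_Cons)
  then have "E v (hd cs)" "E (last cs) v"
    using assms(4) edge_sym[of "last cs" t] edge_sym[of v "last cs"] by blast+
  then have "is_cycle V E (v # cs)"
    using cyc assms(2,3) \<open>cs \<noteq> []\<close> unfolding is_cycle_iff_successively
    by (auto simp: successively_Cons)
  then show ?thesis using assms(1) cummerbund_if_length_ge by fastforce
qed

lemma cummerbund_outside_neighbour:
  assumes "cummerbund V E (a # b # cs)" "{x. E v x} \<subseteq> {x. E a x}" "{x. E v x} \<subseteq> {x. E b x}"
    and "E v u"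
  shows "u \<in> set (a # b # cs)"
proof (rule ccontr)
  assume "u \<notin> set (a # b # cs)"
  moreover have "u \<in> V" using assms(4) edge_vertices by blast
  ultimately have "\<not> (E a u \<and> E u b)"
    using cummerbund_not_insertable[of V E "[a]" "b # cs" u] assms(1) by simp
  moreover have "E a u" "E b u" using assms(2-4) by blast+
  ultimately show False using edge_sym by blast
qed

lemma is_cycle_close_gap:
  assumes "distinct (xs @ ys)" "set (xs @ ys) \<subseteq> V" "successively E xs" "successively E ys"
    and "E (last ys) (hd xs)" "2 \<le> length xs" "2 \<le> length ys"
    and "{x. E (last xs) x} \<subseteq> {x. E (hd ys) x} \<or> {x. E (hd ys) x} \<subseteq> {x. E (last xs) x}"
  shows "is_cycle V E (butlast xs @ ys) \<or> is_cycle V E (xs @ tl ys)"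
proof -
  obtain xs' d e where xs: "xs = xs' @ [d, e]"
    using assms(6) by (cases xs rule: rev_cases; cases "butlast xs" rule: rev_cases) auto
  obtain f g ys' where ys: "ys = f # g # ys'"
    using assms(7) by (cases ys; cases "tl ys") auto
  from assms(8) show ?thesis
  proof
    assume "{x. E (last xs) x} \<subseteq> {x. E (hd ys) x}"
    moreover have "E d e" using assms(3) xs by (simp add: successively_append_iff)
    moreover have "last xs = e" "hd ys = f" using xs ys by simp_all
    ultimately have "E f d" using edge_sym by blast
    then have "E d f" by (rule edge_sym)
    then have "is_cycle V E (xs' @ d # f # g # ys')"
      using assms(1-5) xs ys unfolding is_cycle_iff_successively
      by (auto simp: successively_append_iff hd_append)
    then show ?thesis using xs ys by (simp add: butlast_append)
  next
    assume "{x. E (hd ys) x} \<subseteq> {x. E (last xs) x}"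
    moreover have "E f g" using assms(4) ys by simp
    moreover have "last xs = e" "hd ys = f" using xs ys by simp_all
    ultimately have "E e g" by blast
    then have "is_cycle V E (xs' @ d # e # g # ys')"
      using assms(1-5) xs ys unfolding is_cycle_iff_successively
      by (auto simp: successively_append_iff hd_append)
    then show ?thesis using xs ys by simp
  qed
qed

lemma cummerbund_reroute_through_vertex:
  assumes "\<not> has_induced_P4 V E" "\<not> has_induced_2K2 V E"
    and C: "cummerbund V E (a # cs1 @ b # cs2)"
    and v: "v \<in> V" "v \<notin> set (a # cs1 @ b # cs2)" "E v a" "E v b"
    and "cs1 \<noteq> []" "cs2 \<noteq> []" "E (last cs2) b"
  shows "\<exists>D. cummerbund V E D \<and> v \<in> set D"
proof -
  define xs ys where "xs = a # cs1" and "ys = cs2 @ [b, v]"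
  have cyc: "is_cycle V E (a # cs1 @ b # cs2)"
    and longest: "\<And>D. is_cycle V E D \<Longrightarrow> length D \<le> length (a # cs1 @ b # cs2)"
    using C unfolding cummerbund_def by blast+
  have "E b v" "E v a" using v(3,4) edge_sym by blast+
  then have path: "distinct (xs @ ys)" "set (xs @ ys) \<subseteq> V" "successively E xs" "successively E ys"
    "E (last ys) (hd xs)" "2 \<le> length xs" "2 \<le> length ys"
    using cyc v(1,2) \<open>cs1 \<noteq> []\<close> \<open>cs2 \<noteq> []\<close> \<open>E (last cs2) b\<close>
    unfolding xs_def ys_def is_cycle_iff_successively
    by (auto simp: successively_append_iff successively_Cons Suc_le_eq)
  have len: "length (xs @ ys) = Suc (length (a # cs1 @ b # cs2))" by (simp add: xs_def ys_def)
  show ?thesis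
  proof (cases "E (last xs) (hd ys)")
    case True
    then have "is_cycle V E (xs @ ys)"
      using path unfolding is_cycle_iff_successively
      by (auto simp: successively_append_iff hd_append last_append)
    then show ?thesis using longest len by fastforce
  next
    case False
    have "last xs \<in> set cs1" "hd ys \<in> set cs2"
      using \<open>cs1 \<noteq> []\<close> \<open>cs2 \<noteq> []\<close> by (simp_all add: xs_def ys_def)
    then have "last xs \<noteq> hd ys" "last xs \<in> V" "hd ys \<in> V"
      using path(1,2) unfolding xs_def ys_def by auto
    then have "{x. E (last xs) x} \<subseteq> {x. E (hd ys) x} \<or> {x. E (hd ys) x} \<subseteq> {x. E (last xs) x}"
      using nbhds_nested_if_P4_2K2_free[OF assms(1,2)] False by blast
    then obtain D where "is_cycle V E D" "D = butlast xs @ ys \<or> D = xs @ tl ys"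
      using is_cycle_close_gap[OF path] by blast
    moreover have "length D = length (a # cs1 @ b # cs2)" "v \<in> set D"
      using calculation(2) \<open>cs2 \<noteq> []\<close> by (auto simp: xs_def ys_def)
    ultimately show ?thesis using C cummerbund_if_length_ge by fastforce
  qed
qed

lemma cummerbund_through_vertex_if_non_neighbours_dominate:
  assumes "two_connected V E" "\<not> has_induced_P4 V E" "\<not> has_induced_2K2 V E"
    and C: "cummerbund V E (a # cs)"
    and v: "v \<in> V" "v \<notin> set (a # cs)" "E v a"
    and dom: "\<forall>t\<in>set cs. \<not> E v t \<longrightarrow> {x. E v x} \<subseteq> {x. E t x}"
  shows "\<exists>D. cummerbund V E D \<and> v \<in> set D"
proof -
  have cyc: "is_cycle V E (a # cs)"
    and longest: "\<And>D. is_cycle V E D \<Longrightarrow> length D \<le> Suc (length cs)"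
    using C unfolding cummerbund_def by auto
  obtain r r' rs where cs: "cs = r # r' # rs"
    using cyc unfolding is_cycle_def by (cases cs; cases "tl cs") auto
  have "\<not> (E a v \<and> E v r)"
    using cummerbund_not_insertable[of V E "[a]" cs v] C v(1,2) cs by simp
  then have "\<not> E v r" using v(3) edge_sym by blast
  have "cummerbund V E (cs @ [a])" using cummerbund_rotate[of V E "[a]" cs] C by simp
  then have "\<not> (E (last cs) v \<and> E v a)"
    using cummerbund_not_insertable[of V E cs "[a]" v] v(1,2) cs by simp
  then have "\<not> E v (last cs)" using v(3) edge_sym by blast
  have "\<exists>b\<in>set cs. E v b"
  proof (rule ccontr)
    assume none: "\<not> (\<exists>b\<in>set cs. E v b)"
    obtain u where u: "E v u" "u \<noteq> a"
      using two_connected_other_neighbour[OF assms(1) v(1)] by blast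
    have "cummerbund V E (r # r' # rs @ [a])"
      using cummerbund_rotate[of V E "[a]" cs] C cs by simp
    moreover have "{x. E v x} \<subseteq> {x. E r x}" "{x. E v x} \<subseteq> {x. E r' x}"
      using dom none cs by auto
    ultimately have "u \<in> set (r # r' # rs @ [a])"
      by (rule cummerbund_outside_neighbour[OF _ _ _ u(1)])
    then show False using none u cs by auto
  qed
  from split_list_first_prop[OF this]
  obtain cs1 b cs2 where split: "cs = cs1 @ b # cs2" "E v b" "\<forall>x\<in>set cs1. \<not> E v x"
    by blast
  have "cs1 \<noteq> []" using \<open>\<not> E v r\<close> split cs by (cases cs1) auto
  have "cs2 \<noteq> []" using \<open>\<not> E v (last cs)\<close> split by auto
  have "last cs2 \<in> set cs" "\<not> E v (last cs2)"
    using \<open>cs2 \<noteq> []\<close> \<open>\<not> E v (last cs)\<close> split(1) by auto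
  then have "{x. E v x} \<subseteq> {x. E (last cs2) x}" using dom by blast
  then have "E (last cs2) b" using split(2) by blast
  moreover have "cummerbund V E (a # cs1 @ b # cs2)" "v \<notin> set (a # cs1 @ b # cs2)"
    using C v(2) split(1) by simp_all
  ultimately show ?thesis
    using cummerbund_reroute_through_vertex[OF assms(2,3) _ v(1) _ v(3) split(2)]
      \<open>cs1 \<noteq> []\<close> \<open>cs2 \<noteq> []\<close> by blast
qed

lemma cummerbund_through_outside_vertex:
  assumes "two_connected V E" "\<not> has_induced_P4 V E" "\<not> has_induced_2K2 V E"
    and C: "cummerbund V E C" and v: "v \<in> V" "v \<notin> set C"
  shows "\<exists>D. cummerbund V E D \<and> v \<in> set D"
proof (cases "\<exists>t\<in>set C. {x. E t x} \<subseteq> {x. E v x}")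
  case True
  then obtain t where "t \<in> set C" "{x. E t x} \<subseteq> {x. E v x}" by blast
  moreover from split_list[OF this(1)] obtain xs ys where "C = xs @ t # ys" by blast
  ultimately have "cummerbund V E (v # ys @ xs)"
    using cummerbund_replace_vertex cummerbund_rotate[of V E xs "t # ys"] C v by simp
  then show ?thesis by auto
next
  case False
  have "set C \<subseteq> V" using C unfolding cummerbund_def is_cycle_def by blast
  have dom: "\<forall>t\<in>set C. \<not> E v t \<longrightarrow> {x. E v x} \<subseteq> {x. E t x}"
  proof (intro ballI impI)
    fix t assume t: "t \<in> set C" "\<not> E v t"
    then have "\<not> E t v" using edge_sym by blast
    moreover have "t \<in> V" "t \<noteq> v" using t(1) v \<open>set C \<subseteq> V\<close> by auto
    ultimately show "{x. E v x} \<subseteq> {x. E t x}"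
      using nbhds_nested_if_P4_2K2_free[OF assms(2,3) \<open>t \<in> V\<close> v(1)] False t(1) by blast
  qed
  show ?thesis
  proof (cases "\<exists>a\<in>set C. E v a")
    case True
    then obtain a where a: "a \<in> set C" "E v a" by blast
    from split_list[OF a(1)] obtain xs ys where C_split: "C = xs @ a # ys" by blast
    have "cummerbund V E (a # ys @ xs)"
      using C C_split cummerbund_rotate[of V E xs "a # ys"] by simp
    moreover have "v \<notin> set (a # ys @ xs)" "\<forall>t\<in>set (ys @ xs). \<not> E v t \<longrightarrow> {x. E v x} \<subseteq> {x. E t x}"
      using v(2) dom C_split by auto
    ultimately show ?thesis
      using cummerbund_through_vertex_if_non_neighbours_dominate[OF assms(1-3) _ v(1) _ a(2)] by blast
  next
    case False
    obtain u where "E v u" using two_connected_other_neighbour[OF assms(1) v(1)] by blast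
    obtain a b cs where "C = a # b # cs"
      using C unfolding cummerbund_def is_cycle_def by (cases C; cases "tl C") auto
    moreover have "{x. E v x} \<subseteq> {x. E a x}" "{x. E v x} \<subseteq> {x. E b x}"
      using dom False calculation by auto
    ultimately have "u \<in> set C" using cummerbund_outside_neighbour[OF _ _ _ \<open>E v u\<close>] C by simp
    then show ?thesis using False \<open>E v u\<close> by blast
  qed
qed

end

theorem theorem12:
  fixes V :: "'a set" and E :: "'a \<Rightarrow> 'a \<Rightarrow> bool"
  assumes "simple_graph V E"
    and "two_connected V E"
    and "\<not> has_induced_P4 V E"
    and "\<not> has_induced_2K2 V E"
  shows "cummerbund_covered V E"
  unfolding cummerbund_covered_def
proof
  fix v assume "v \<in> V"
  have "finite V" using assms(1) unfolding simple_graph_def by blast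
  then obtain C where C: "cummerbund V E C"
    using cycle_exists_if_P4_2K2_free[OF assms] cummerbund_exists by blast
  show "\<exists>cs. cummerbund V E cs \<and> v \<in> set cs"
  proof (cases "v \<in> set C")
    case True
    then show ?thesis using C by blast
  next
    case False
    then show ?thesis using cummerbund_through_outside_vertex[OF assms C \<open>v \<in> V\<close>] by blast
  qed
qed

end
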